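(* Let $(E,\mathcal{P})$ be a random locally convex module over $K$ with base $(\Omega,\mathcal{F},P)$, endowed with its $(\varepsilon,\lambda)$-topology $\mathcal{T}_{\varepsilon,\lambda}$. Then there exist a family of random normed modules $\{(E_q,\|\cdot\|_q):q\in\mathcal{Q}\}$ over $K$ with base $(\Omega,\mathcal{F},P)$ and an $L^0(\mathcal{F},K)$-module homomorphism $h:E\to\prod_{q\in\mathcal{Q}}E_q$ such that $h$ is a homeomorphism from $(E,\mathcal{T}_{\varepsilon,\lambda})$ onto $(h(E),\mathcal{T})$, where $\mathcal{T}$ is the (relative) product topology of $\prod_{q\in\mathcal{Q}}(E_q,\mathcal{T}_{\varepsilon,\lambda})$.
   Context: $(\Omega,\mathcal{F},P)$ is a probability space, $K=\mathbb{R}$ or $\mathbb{C}$, $L^0(\mathcal{F},K)$ is the algebra of equivalence classes (modulo $P$-a.s. equality) of $K$-valued $\mathcal{F}$-measurable random variables, $L^0_+$ the nonnegative elements of $L^0(\mathcal{F},\mathbb{R})$. An $L^0$-seminorm on an $L^0(\mathcal{F},K)$-module $E$ is a map $\|\cdot\|:E\to L^0_+$ with $\|\xi x\|=|\xi|\|x\|$ and $\|x+y\|\le\|x\|+\|y\|$; it is an $L^0$-norm if moreover $\|x\|=0$ implies $x=\theta$. A random normed module is a pair $(E,\|\cdot\|)$ with $\|\cdot\|$ an $L^0$-norm. A random locally convex module $(E,\mathcal{P})$ is an $L^0(\mathcal{F},K)$-module $E$ with a family $\mathcal{P}$ of $L^0$-seminorms such that $\bigvee\{\|x\|:\|\cdot\|\in\mathcal{P}\}=0$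 iff $x=\theta$ (a random normed module is the case $\mathcal{P}=\{\|\cdot\|\}$). For finite nonempty $\mathcal{Q}\subset\mathcal{P}$ let $\|x\|_{\mathcal{Q}}=\bigvee_{\|\cdot\|\in\mathcal{Q}}\|x\|$; the $(\varepsilon,\lambda)$-topology $\mathcal{T}_{\varepsilon,\lambda}$ on $E$ has local base at $\theta$ the sets $\{x: P\{\|x\|_{\mathcal{Q}}<\varepsilon\}>1-\lambda\}$ ($\mathcal{Q}$ finite nonempty, $\varepsilon>0$, $0<\lambda<1$). *)

theory Defs
  imports "HOL-Probability.Probability"
begin

text \<open>Elements of L0(F,K) are represented by F-measurable K-valued functions;
 two representatives are identified when they agree almost surely.
 The module E is given by a carrier set with addition, zero and an action
 of representatives of L0 which must respect almost sure equality.\<close>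

definition L0_module ::
  "'w measure \<Rightarrow> 'e set \<Rightarrow> ('e \<Rightarrow> 'e \<Rightarrow> 'e) \<Rightarrow> 'e \<Rightarrow>
   (('w \<Rightarrow> 'k::{real_normed_field,banach}) \<Rightarrow> 'e \<Rightarrow> 'e) \<Rightarrow> bool" where
  "L0_module M E add zero smul \<longleftrightarrow>
     zero \<in> E \<and>
     (\<forall>x\<in>E. \<forall>y\<in>E. add x y \<in> E) \<and>
     (\<forall>\<xi>\<in>borel_measurable M. \<forall>x\<in>E. smul \<xi> x \<in> E) \<and>
     (\<forall>x\<in>E. \<forall>y\<in>E. \<forall>z\<in>E. add (add x y) z = add x (add y z)) \<and>
     (\<forall>x\<in>E. \<forall>y\<in>E. add x y = add y x) \<and>
     (\<forall>x\<in>E. add zero x = x) \<and>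
     (\<forall>x\<in>E. \<exists>y\<in>E. add x y = zero) \<and>
     (\<forall>\<xi>\<in>borel_measurable M. \<forall>\<eta>\<in>borel_measurable M. \<forall>x\<in>E.
         (AE \<omega> in M. \<xi> \<omega> = \<eta> \<omega>) \<longrightarrow> smul \<xi> x = smul \<eta> x) \<and>
     (\<forall>\<xi>\<in>borel_measurable M. \<forall>x\<in>E. \<forall>y\<in>E.
         smul \<xi> (add x y) = add (smul \<xi> x) (smul \<xi> y)) \<and>
     (\<forall>\<xi>\<in>borel_measurable M. \<forall>\<eta>\<in>borel_measurable M. \<forall>x\<in>E.
         smul (\<lambda>\<omega>. \<xi> \<omega> + \<eta> \<omega>) x = add (smul \<xi> x) (smul \<eta> x)) \<and>
     (\<forall>\<xi>\<in>borel_measurable M. \<forall>\<eta>\<in>borel_measurable M. \<forall>x\<in>E.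
         smul (\<lambda>\<omega>. \<xi> \<omega> * \<eta> \<omega>) x = smul \<xi> (smul \<eta> x)) \<and>
     (\<forall>x\<in>E. smul (\<lambda>\<omega>. 1) x = x)"

definition L0_seminorm ::
  "'w measure \<Rightarrow> 'e set \<Rightarrow> ('e \<Rightarrow> 'e \<Rightarrow> 'e) \<Rightarrow>
   (('w \<Rightarrow> 'k::{real_normed_field,banach}) \<Rightarrow> 'e \<Rightarrow> 'e) \<Rightarrow> ('e \<Rightarrow> 'w \<Rightarrow> real) \<Rightarrow> bool" where
  "L0_seminorm M E add smul nm \<longleftrightarrow>
     (\<forall>x\<in>E. nm x \<in> borel_measurable M \<and> (AE \<omega> in M. 0 \<le> nm x \<omega>)) \<and>
     (\<forall>\<xi>\<in>borel_measurable M. \<forall>x\<in>E.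
         AE \<omega> in M. nm (smul \<xi> x) \<omega> = norm (\<xi> \<omega>) * nm x \<omega>) \<and>
     (\<forall>x\<in>E. \<forall>y\<in>E. AE \<omega> in M. nm (add x y) \<omega> \<le> nm x \<omega> + nm y \<omega>)"

definition L0_norm ::
  "'w measure \<Rightarrow> 'e set \<Rightarrow> ('e \<Rightarrow> 'e \<Rightarrow> 'e) \<Rightarrow> 'e \<Rightarrow>
   (('w \<Rightarrow> 'k::{real_normed_field,banach}) \<Rightarrow> 'e \<Rightarrow> 'e) \<Rightarrow> ('e \<Rightarrow> 'w \<Rightarrow> real) \<Rightarrow> bool" where
  "L0_norm M E add zero smul nm \<longleftrightarrow>
     L0_seminorm M E add smul nm \<and>
     (\<forall>x\<in>E. (AE \<omega> in M. nm x \<omega> = 0) \<longrightarrow> x = zero)"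

definition random_normed_module ::
  "'w measure \<Rightarrow> 'e set \<Rightarrow> ('e \<Rightarrow> 'e \<Rightarrow> 'e) \<Rightarrow> 'e \<Rightarrow>
   (('w \<Rightarrow> 'k::{real_normed_field,banach}) \<Rightarrow> 'e \<Rightarrow> 'e) \<Rightarrow> ('e \<Rightarrow> 'w \<Rightarrow> real) \<Rightarrow> bool" where
  "random_normed_module M E add zero smul nm \<longleftrightarrow>
     L0_module M E add zero smul \<and> L0_norm M E add zero smul nm"

text \<open>The condition
  \<open>\<Or>{||x|| : ||.|| \<in> P} = 0 iff x = \<theta>\<close> is written out: since all
  the seminorms are nonnegative, the supremum in L0 vanishes iff every member
  vanishes a.s.; the direction x = \<theta> \<Longrightarrow> sup = 0 holds for every seminorm.\<close>
definition random_locally_convex_module ::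
  "'w measure \<Rightarrow> 'e set \<Rightarrow> ('e \<Rightarrow> 'e \<Rightarrow> 'e) \<Rightarrow> 'e \<Rightarrow>
   (('w \<Rightarrow> 'k::{real_normed_field,banach}) \<Rightarrow> 'e \<Rightarrow> 'e) \<Rightarrow> ('e \<Rightarrow> 'w \<Rightarrow> real) set \<Rightarrow> bool" where
  "random_locally_convex_module M E add zero smul PP \<longleftrightarrow>
     L0_module M E add zero smul \<and>
     (\<forall>p\<in>PP. L0_seminorm M E add smul p) \<and>
     (\<forall>x\<in>E. (\<forall>p\<in>PP. AE \<omega> in M. p x \<omega> = 0) \<longrightarrow> x = zero)"

definition eps_lambda_nbhd ::
  "'w measure \<Rightarrow> 'e set \<Rightarrow> ('e \<Rightarrow> 'w \<Rightarrow> real) set \<Rightarrow> real \<Rightarrow> real \<Rightarrow> 'e set" where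
  "eps_lambda_nbhd M E Q eps lam =
     {z \<in> E. measure M {\<omega> \<in> space M. Max ((\<lambda>p. p z \<omega>) ` Q) < eps} > 1 - lam}"

definition eps_lambda_topology ::
  "'w measure \<Rightarrow> 'e set \<Rightarrow> ('e \<Rightarrow> 'e \<Rightarrow> 'e) \<Rightarrow> ('e \<Rightarrow> 'w \<Rightarrow> real) set \<Rightarrow> 'e topology" where
  "eps_lambda_topology M E add PP = topology (\<lambda>U. U \<subseteq> E \<and>
     (\<forall>x\<in>U. \<exists>Q eps lam. finite Q \<and> Q \<noteq> {} \<and> Q \<subseteq> PP \<and> 0 < eps \<and> 0 < lam \<and> lam < 1 \<and>
        (\<forall>z\<in>eps_lambda_nbhd M E Q eps lam. add x z \<in> U)))"

end

theory Submission
  imports Defs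
begin

text \<open>For a finite nonempty \<open>Q \<subseteq> \<P>\<close> the pointwise maximum \<open>\<parallel>\<cdot>\<parallel>\<^sub>Q\<close> of the seminorms
  in \<open>Q\<close> is again an \<open>L\<^sup>0\<close>-seminorm, and \<open>E\<^sub>Q\<close>, the quotient of \<open>E\<close> by the kernel of
  \<open>\<parallel>\<cdot>\<parallel>\<^sub>Q\<close>, is a random normed module. Let \<open>h\<close> send \<open>x\<close> to its family of classes
  \<open>([x]\<^sub>Q)\<^sub>Q\<close>; it is a module homomorphism, and it is injective because \<open>\<P>\<close> separates points.
  The basic neighbourhood \<open>x + N(Q, \<epsilon>, \<lambda>)\<close> of \<open>E\<close> is exactly the preimage of the basic
  neighbourhood \<open>[x]\<^sub>Q + N(\<epsilon>, \<lambda>)\<close> of \<open>E\<^sub>Q\<close>, so the \<open>(\<epsilon>,\<lambda>)\<close>-topology of \<open>E\<close> is the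
  initial topology of the quotient maps, which makes \<open>h\<close> a homeomorphism onto its image in
  the product.\<close>

section \<open>Embeddings into product topologies\<close>

lemma homeomorphic_map_into_product_topology:
  assumes continuous: "\<And>i. i \<in> I \<Longrightarrow> continuous_map X (Y i) (\<lambda>x. f x i)"
    and extensional: "\<And>x. x \<in> topspace X \<Longrightarrow> f x \<in> extensional I"
    and inj: "inj_on f (topspace X)"
    and initial: "\<And>U x. openin X U \<Longrightarrow> x \<in> U \<Longrightarrow>
      \<exists>i\<in>I. \<exists>W. openin (Y i) W \<and> f x i \<in> W \<and> (\<forall>y\<in>topspace X. f y i \<in> W \<longrightarrow> y \<in> U)"
  shows "homeomorphic_map X (subtopology (product_topology Y I) (f ` topspace X)) f"
proof (rule bijective_open_imp_homeomorphic_map)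
  have f_continuous: "continuous_map X (product_topology Y I) f"
    using continuous extensional by (auto simp: continuous_map_componentwise)
  then show "continuous_map X (subtopology (product_topology Y I) (f ` topspace X)) f"
    by (rule continuous_map_into_subtopology) blast
  have f_topspace: "f ` topspace X \<subseteq> topspace (product_topology Y I)"
    using f_continuous by (rule continuous_map_image_subset_topspace)
  then show "f ` topspace X = topspace (subtopology (product_topology Y I) (f ` topspace X))"
    by auto
  show "open_map X (subtopology (product_topology Y I) (f ` topspace X)) f"
    unfolding open_map_def
  proof (intro allI impI)
    fix U assume U: "openin X U"
    show "openin (subtopology (product_topology Y I) (f ` topspace X)) (f ` U)"
    proof (subst openin_subopen, intro ballI)
      fix g assume "g \<in> f ` U"
      then obtain x where x: "x \<in> U" "g = f x" by blast
      obtain i W where i: "i \<in> I" and W: "openin (Y i) W" "f x i \<in> W"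
        and preimage: "\<forall>y\<in>topspace X. f y i \<in> W \<longrightarrow> y \<in> U"
        using initial[OF U x(1)] by blast
      define T where "T = {g \<in> topspace (product_topology Y I). g i \<in> W} \<inter> f ` topspace X"
      have "openin (subtopology (product_topology Y I) (f ` topspace X)) T"
        unfolding T_def openin_subtopology
        using openin_continuous_map_preimage[OF continuous_map_product_projection[of i I Y, OF i] W(1)]
        by blast
      moreover have "g \<in> T"
        using x W(2) f_topspace openin_subset[OF U] by (auto simp: T_def)
      moreover have "T \<subseteq> f ` U"
        using preimage by (auto simp: T_def)
      ultimately show "\<exists>T. openin (subtopology (product_topology Y I) (f ` topspace X)) T \<and> g \<in> T \<and> T \<subseteq> f ` U"
        by blast
    qed
  qed
qed (rule inj)

section \<open>Algebra in an \<open>L\<^sup>0\<close>-module\<close>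

locale prob_L0_module = prob_space M for M :: "'w measure" +
  fixes E :: "'e set" and add :: "'e \<Rightarrow> 'e \<Rightarrow> 'e" and zero :: 'e
    and smul :: "('w \<Rightarrow> 'k::{real_normed_field,banach}) \<Rightarrow> 'e \<Rightarrow> 'e"
  assumes L0_module: "L0_module M E add zero smul"
begin

lemma zero_closed: "zero \<in> E"
  and add_closed: "x \<in> E \<Longrightarrow> y \<in> E \<Longrightarrow> add x y \<in> E"
  and smul_closed: "\<xi> \<in> borel_measurable M \<Longrightarrow> x \<in> E \<Longrightarrow> smul \<xi> x \<in> E"
  and add_assoc: "x \<in> E \<Longrightarrow> y \<in> E \<Longrightarrow> z \<in> E \<Longrightarrow> add (add x y) z = add x (add y z)"
  and add_commute: "x \<in> E \<Longrightarrow> y \<in> E \<Longrightarrow> add x y = add y x"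
  and add_zero_left: "x \<in> E \<Longrightarrow> add zero x = x"
  and add_inverse_ex: "x \<in> E \<Longrightarrow> \<exists>y\<in>E. add x y = zero"
  and smul_cong_AE: "\<xi> \<in> borel_measurable M \<Longrightarrow> \<eta> \<in> borel_measurable M \<Longrightarrow> x \<in> E \<Longrightarrow>
    (AE \<omega> in M. \<xi> \<omega> = \<eta> \<omega>) \<Longrightarrow> smul \<xi> x = smul \<eta> x"
  and smul_add: "\<xi> \<in> borel_measurable M \<Longrightarrow> x \<in> E \<Longrightarrow> y \<in> E \<Longrightarrow>
    smul \<xi> (add x y) = add (smul \<xi> x) (smul \<xi> y)"
  and add_smul: "\<xi> \<in> borel_measurable M \<Longrightarrow> \<eta> \<in> borel_measurable M \<Longrightarrow> x \<in> E \<Longrightarrow>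
    smul (\<lambda>\<omega>. \<xi> \<omega> + \<eta> \<omega>) x = add (smul \<xi> x) (smul \<eta> x)"
  and smul_smul: "\<xi> \<in> borel_measurable M \<Longrightarrow> \<eta> \<in> borel_measurable M \<Longrightarrow> x \<in> E \<Longrightarrow>
    smul (\<lambda>\<omega>. \<xi> \<omega> * \<eta> \<omega>) x = smul \<xi> (smul \<eta> x)"
  and smul_one: "x \<in> E \<Longrightarrow> smul (\<lambda>_. 1) x = x"
  by (insert L0_module[unfolded L0_module_def]) meson+

lemma add_left_commute:
  assumes "x \<in> E" "y \<in> E" "z \<in> E"
  shows "add x (add y z) = add y (add x z)"
  using assms add_assoc[of x y z, symmetric] add_assoc[of y x z] add_commute[of x y]
  by simp

lemma add_zero_right: "x \<in> E \<Longrightarrow> add x zero = x"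
  using add_commute[OF _ zero_closed] add_zero_left by simp

lemma zero_smul:
  assumes x: "x \<in> E"
  shows "smul (\<lambda>_. 0) x = zero"
proof -
  define s where "s = smul (\<lambda>_. 0) x"
  have s: "s \<in> E" using x by (simp add: s_def smul_closed)
  have idem: "add s s = s"
    using add_smul[of "\<lambda>_. 0" "\<lambda>_. 0" x] x by (simp add: s_def)
  obtain y where y: "y \<in> E" "add s y = zero" using add_inverse_ex[OF s] by blast
  have "zero = add (add s s) y" using idem y by simp
  also have "\<dots> = s" using s y by (simp add: add_assoc add_zero_right)
  finally show ?thesis by (simp add: s_def)
qed

definition neg :: "'e \<Rightarrow> 'e" where
  "neg x = smul (\<lambda>_. -1) x"

definition diff :: "'e \<Rightarrow> 'e \<Rightarrow> 'e" where
  "diff x y = add x (neg y)"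

lemma neg_closed: "x \<in> E \<Longrightarrow> neg x \<in> E"
  by (simp add: neg_def smul_closed)

lemma diff_closed: "x \<in> E \<Longrightarrow> y \<in> E \<Longrightarrow> diff x y \<in> E"
  by (simp add: diff_def add_closed neg_closed)

lemma add_neg_self: "x \<in> E \<Longrightarrow> add x (neg x) = zero"
  using add_smul[of "\<lambda>_. 1" "\<lambda>_. -1" x] by (simp add: neg_def smul_one zero_smul)

lemma neg_add: "x \<in> E \<Longrightarrow> y \<in> E \<Longrightarrow> neg (add x y) = add (neg x) (neg y)"
  by (simp add: neg_def smul_add)

lemma neg_neg: "x \<in> E \<Longrightarrow> neg (neg x) = x"
  using smul_smul[of "\<lambda>_. -1" "\<lambda>_. -1" x] by (simp add: neg_def smul_one)

lemma smul_neg: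
  "\<xi> \<in> borel_measurable M \<Longrightarrow> x \<in> E \<Longrightarrow> smul \<xi> (neg x) = neg (smul \<xi> x)"
  using smul_smul[of "\<lambda>_. -1" \<xi> x] smul_smul[of \<xi> "\<lambda>_. -1" x] by (simp add: neg_def mult.commute)

lemma diff_self: "x \<in> E \<Longrightarrow> diff x x = zero"
  by (simp add: diff_def add_neg_self)

lemma neg_zero: "neg zero = zero"
  using smul_smul[of "\<lambda>_. -1" "\<lambda>_. 0" zero, symmetric]
  by (simp add: neg_def zero_closed zero_smul)

lemma diff_zero: "x \<in> E \<Longrightarrow> diff x zero = x"
  by (simp add: diff_def neg_zero add_zero_right)

lemma neg_diff: "x \<in> E \<Longrightarrow> y \<in> E \<Longrightarrow> neg (diff x y) = diff y x"
  using add_commute[of "neg x" y] by (simp add: diff_def neg_add neg_closed neg_neg)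

lemma diff_add_cancel: "x \<in> E \<Longrightarrow> y \<in> E \<Longrightarrow> add (diff x y) y = x"
  using add_assoc[of x "neg y" y] add_commute[of "neg y" y]
  by (simp add: diff_def neg_closed add_neg_self add_zero_right)

lemma add_diff_inverse: "x \<in> E \<Longrightarrow> y \<in> E \<Longrightarrow> add x (diff y x) = y"
  using add_left_commute[of x y "neg x"]
  by (simp add: diff_def neg_closed add_neg_self add_zero_right)

lemma add_diff_cancel_left': "x \<in> E \<Longrightarrow> y \<in> E \<Longrightarrow> diff (add x y) x = y"
  using add_commute[of x y] add_assoc[of y x "neg x"]
  by (simp add: diff_def neg_closed add_neg_self add_zero_right)

lemma add_diff_diff:
  assumes "x \<in> E" "y \<in> E" "z \<in> E"
  shows "add (diff x y) (diff y z) = diff x z"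
  using assms add_assoc[of x "neg y" "add y (neg z)"] add_assoc[of "neg y" y "neg z", symmetric]
    add_commute[of "neg y" y]
  by (simp add: diff_def neg_closed add_closed add_neg_self add_zero_left)

lemma add_diff_add:
  assumes "x \<in> E" "x' \<in> E" "y \<in> E" "y' \<in> E"
  shows "diff (add x y) (add x' y') = add (diff x x') (diff y y')"
  using assms add_assoc[of x y "add (neg x') (neg y')"] add_left_commute[of y "neg x'" "neg y'"]
    add_assoc[of x "neg x'" "add y (neg y')", symmetric]
  by (simp add: diff_def neg_add neg_closed add_closed)

lemma smul_diff: "\<xi> \<in> borel_measurable M \<Longrightarrow> x \<in> E \<Longrightarrow> y \<in> E \<Longrightarrow>
    smul \<xi> (diff x y) = diff (smul \<xi> x) (smul \<xi> y)"
  by (simp add: diff_def smul_add neg_closed smul_neg)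

lemma diff_eq_zeroD: "x \<in> E \<Longrightarrow> y \<in> E \<Longrightarrow> diff x y = zero \<Longrightarrow> x = y"
  using diff_add_cancel[of x y] by (simp add: add_zero_left)

end

section \<open>\<open>L\<^sup>0\<close>-seminorms and quotients\<close>

lemma L0_seminormD:
  assumes "L0_seminorm M E add smul n"
  shows L0_seminorm_measurable: "x \<in> E \<Longrightarrow> n x \<in> borel_measurable M"
    and L0_seminorm_nonneg: "x \<in> E \<Longrightarrow> AE \<omega> in M. 0 \<le> n x \<omega>"
    and L0_seminorm_smul: "\<xi> \<in> borel_measurable M \<Longrightarrow> x \<in> E \<Longrightarrow>
      AE \<omega> in M. n (smul \<xi> x) \<omega> = norm (\<xi> \<omega>) * n x \<omega>"
    and L0_seminorm_triangle: "x \<in> E \<Longrightarrow> y \<in> E \<Longrightarrow>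
      AE \<omega> in M. n (add x y) \<omega> \<le> n x \<omega> + n y \<omega>"
  by (insert assms[unfolded L0_seminorm_def]) meson+

definition max_seminorm :: "('e \<Rightarrow> 'w \<Rightarrow> real) set \<Rightarrow> 'e \<Rightarrow> 'w \<Rightarrow> real" where
  "max_seminorm Q x \<omega> = Max ((\<lambda>p. p x \<omega>) ` Q)"

lemma L0_seminorm_max_seminorm:
  fixes smul :: "('w \<Rightarrow> 'k::{real_normed_field,banach}) \<Rightarrow> 'e \<Rightarrow> 'e"
  assumes Q: "finite Q" "Q \<noteq> {}" and seminorm: "\<And>p. p \<in> Q \<Longrightarrow> L0_seminorm M E add smul p"
  shows "L0_seminorm M E add smul (max_seminorm Q)"
  unfolding L0_seminorm_def
proof (intro conjI ballI)
  fix x assume x: "x \<in> E"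
  show "max_seminorm Q x \<in> borel_measurable M"
    unfolding max_seminorm_def[abs_def]
    using Q x by (intro borel_measurable_Max) (auto intro: L0_seminorm_measurable[OF seminorm])
  have "AE \<omega> in M. \<forall>p\<in>Q. 0 \<le> p x \<omega>"
    using Q x by (intro AE_finite_allI) (auto intro: L0_seminorm_nonneg[OF seminorm])
  then show "AE \<omega> in M. 0 \<le> max_seminorm Q x \<omega>"
    by eventually_elim (use Q in \<open>auto simp: max_seminorm_def Max_ge_iff\<close>)
next
  fix \<xi> :: "'w \<Rightarrow> 'k" and x assume \<xi>: "\<xi> \<in> borel_measurable M" and x: "x \<in> E"
  have "AE \<omega> in M. \<forall>p\<in>Q. p (smul \<xi> x) \<omega> = norm (\<xi> \<omega>) * p x \<omega>"
    using Q \<xi> x by (intro AE_finite_allI) (auto intro: L0_seminorm_smul[OF seminorm])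
  then show "AE \<omega> in M. max_seminorm Q (smul \<xi> x) \<omega> = norm (\<xi> \<omega>) * max_seminorm Q x \<omega>"
  proof eventually_elim
    case (elim \<omega>)
    have "(\<lambda>p. p (smul \<xi> x) \<omega>) ` Q = (\<lambda>t. norm (\<xi> \<omega>) * t) ` (\<lambda>p. p x \<omega>) ` Q"
      using elim by (auto simp: image_image)
    moreover have "mono (\<lambda>t. norm (\<xi> \<omega>) * t)"
      by (intro monoI mult_left_mono) auto
    ultimately show ?case
      using Q by (simp add: max_seminorm_def mono_Max_commute)
  qed
next
  fix x y assume x: "x \<in> E" and y: "y \<in> E"
  have "AE \<omega> in M. \<forall>p\<in>Q. p (add x y) \<omega> \<le> p x \<omega> + p y \<omega>"
    using Q x y by (intro AE_finite_allI) (auto intro: L0_seminorm_triangle[OF seminorm])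
  then show "AE \<omega> in M. max_seminorm Q (add x y) \<omega> \<le> max_seminorm Q x \<omega> + max_seminorm Q y \<omega>"
  proof eventually_elim
    case (elim \<omega>)
    have "p x \<omega> + p y \<omega> \<le> max_seminorm Q x \<omega> + max_seminorm Q y \<omega>" if "p \<in> Q" for p
      using Q that by (intro add_mono) (auto simp: max_seminorm_def)
    then show ?case
      using elim Q by (force simp: max_seminorm_def)
  qed
qed

lemma eps_lambda_nbhd_max_seminorm:
  "finite Q \<Longrightarrow> Q \<noteq> {} \<Longrightarrow> eps_lambda_nbhd M E {max_seminorm Q} e l = eps_lambda_nbhd M E Q e l"
  by (simp add: eps_lambda_nbhd_def max_seminorm_def)

lemma eps_lambda_nbhd_singleton:
  "eps_lambda_nbhd M E {p} e l = {z \<in> E. 1 - l < measure M {\<omega> \<in> space M. p z \<omega> < e}}"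
  by (simp add: eps_lambda_nbhd_def)

lemma max_seminorm_singleton: "max_seminorm {p} = p"
  by (simp add: fun_eq_iff max_seminorm_def)

definition class_rep :: "'a set \<Rightarrow> 'a" where
  "class_rep c = (SOME x. x \<in> c)"

locale L0_seminormed_module = prob_L0_module M E add zero smul
  for M :: "'w measure" and E :: "'e set" and add zero
    and smul :: "('w \<Rightarrow> 'k::{real_normed_field,banach}) \<Rightarrow> 'e \<Rightarrow> 'e" +
  fixes n :: "'e \<Rightarrow> 'w \<Rightarrow> real"
  assumes L0_seminorm: "L0_seminorm M E add smul n"
begin

lemmas seminorm_measurable = L0_seminorm_measurable[OF L0_seminorm]
lemmas seminorm_nonneg = L0_seminorm_nonneg[OF L0_seminorm]
lemmas seminorm_smul = L0_seminorm_smul[OF L0_seminorm]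
lemmas seminorm_triangle = L0_seminorm_triangle[OF L0_seminorm]

lemma seminorm_zero: "AE \<omega> in M. n zero \<omega> = 0"
  using seminorm_smul[of "\<lambda>_. 0" zero] by (simp add: zero_closed zero_smul)

lemma seminorm_neg: "x \<in> E \<Longrightarrow> AE \<omega> in M. n (neg x) \<omega> = n x \<omega>"
  using seminorm_smul[of "\<lambda>_. -1" x] by (simp add: neg_def)

definition seminorm_equiv :: "'e \<Rightarrow> 'e \<Rightarrow> bool" where
  "seminorm_equiv x y \<longleftrightarrow> (AE \<omega> in M. n (diff x y) \<omega> = 0)"

lemma seminorm_equiv_refl: "x \<in> E \<Longrightarrow> seminorm_equiv x x"
  by (simp add: seminorm_equiv_def diff_self seminorm_zero)

lemma seminorm_equiv_sym:
  assumes "x \<in> E" "y \<in> E" "seminorm_equiv x y"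
  shows "seminorm_equiv y x"
  using seminorm_neg[OF diff_closed[OF assms(1,2)]] assms(3)
  unfolding seminorm_equiv_def neg_diff[OF assms(1,2)] by eventually_elim simp

lemma seminorm_equiv_trans:
  assumes "x \<in> E" "y \<in> E" "z \<in> E" "seminorm_equiv x y" "seminorm_equiv y z"
  shows "seminorm_equiv x z"
proof -
  have "AE \<omega> in M. n (diff x z) \<omega> \<le> n (diff x y) \<omega> + n (diff y z) \<omega>"
    using seminorm_triangle[of "diff x y" "diff y z"] assms(1-3)
    by (simp add: diff_closed add_diff_diff)
  with seminorm_nonneg[OF diff_closed[OF assms(1,3)]] assms(4,5) show ?thesis
    unfolding seminorm_equiv_def by eventually_elim simp
qed

lemma seminorm_cong:
  assumes "x \<in> E" "y \<in> E" "seminorm_equiv x y"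
  shows "AE \<omega> in M. n x \<omega> = n y \<omega>"
proof -
  have "AE \<omega> in M. n x \<omega> \<le> n (diff x y) \<omega> + n y \<omega>"
    using seminorm_triangle[of "diff x y" y] assms(1,2) by (simp add: diff_closed diff_add_cancel)
  moreover have "AE \<omega> in M. n y \<omega> \<le> n (diff y x) \<omega> + n x \<omega>"
    using seminorm_triangle[of "diff y x" x] assms(1,2) by (simp add: diff_closed diff_add_cancel)
  ultimately show ?thesis
    using assms(3) seminorm_equiv_sym[OF assms] unfolding seminorm_equiv_def by eventually_elim simp
qed

lemma seminorm_equiv_add:
  assumes "x \<in> E" "x' \<in> E" "y \<in> E" "y' \<in> E" "seminorm_equiv x x'" "seminorm_equiv y y'"
  shows "seminorm_equiv (add x y) (add x' y')"
proof -
  have "AE \<omega> in M. n (diff (add x y) (add x' y')) \<omega> \<le> n (diff x x') \<omega> + n (diff y y') \<omega>"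
    using seminorm_triangle[of "diff x x'" "diff y y'"] assms(1-4) by (simp add: diff_closed add_diff_add)
  with seminorm_nonneg[OF diff_closed[OF add_closed[OF assms(1,3)] add_closed[OF assms(2,4)]]] assms(5,6)
  show ?thesis
    unfolding seminorm_equiv_def by eventually_elim simp
qed

lemma seminorm_equiv_smul:
  assumes "\<xi> \<in> borel_measurable M" "x \<in> E" "x' \<in> E" "seminorm_equiv x x'"
  shows "seminorm_equiv (smul \<xi> x) (smul \<xi> x')"
  using seminorm_smul[OF assms(1) diff_closed[OF assms(2,3)]] assms(4)
  unfolding seminorm_equiv_def smul_diff[OF assms(1-3), symmetric] by eventually_elim simp

definition quot_class :: "'e \<Rightarrow> 'e set" where
  "quot_class x = {y \<in> E. seminorm_equiv x y}"

definition quot_add :: "'e set \<Rightarrow> 'e set \<Rightarrow> 'e set" where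
  "quot_add c d = quot_class (add (class_rep c) (class_rep d))"

definition quot_smul :: "('w \<Rightarrow> 'k) \<Rightarrow> 'e set \<Rightarrow> 'e set" where
  "quot_smul \<xi> c = quot_class (smul \<xi> (class_rep c))"

definition quot_norm :: "'e set \<Rightarrow> 'w \<Rightarrow> real" where
  "quot_norm c = n (class_rep c)"

lemma quot_class_eq_iff:
  assumes "x \<in> E" "y \<in> E"
  shows "quot_class x = quot_class y \<longleftrightarrow> seminorm_equiv x y"
  using assms seminorm_equiv_refl seminorm_equiv_sym seminorm_equiv_trans
  unfolding quot_class_def by blast

lemma class_rep_quot_class:
  assumes "x \<in> E"
  shows "class_rep (quot_class x) \<in> E" "seminorm_equiv x (class_rep (quot_class x))"
proof -
  have "x \<in> quot_class x"
    using assms seminorm_equiv_refl by (simp add: quot_class_def)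
  then have "class_rep (quot_class x) \<in> quot_class x"
    unfolding class_rep_def by (rule someI)
  then show "class_rep (quot_class x) \<in> E" "seminorm_equiv x (class_rep (quot_class x))"
    by (simp_all add: quot_class_def)
qed

lemma quot_class_class_rep:
  assumes "x \<in> E"
  shows "quot_class (class_rep (quot_class x)) = quot_class x"
  using assms class_rep_quot_class[OF assms] seminorm_equiv_sym[OF assms class_rep_quot_class(1)[OF assms]]
  by (simp add: quot_class_eq_iff)

lemma quot_add_quot_class:
  assumes "x \<in> E" "y \<in> E"
  shows "quot_add (quot_class x) (quot_class y) = quot_class (add x y)"
proof -
  have "seminorm_equiv (add x y) (add (class_rep (quot_class x)) (class_rep (quot_class y)))"
    using assms class_rep_quot_class by (intro seminorm_equiv_add) auto
  then have "quot_class (add x y) = quot_class (add (class_rep (quot_class x)) (class_rep (quot_class y)))"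
    using assms class_rep_quot_class by (simp add: quot_class_eq_iff add_closed)
  then show ?thesis
    by (simp add: quot_add_def)
qed

lemma quot_smul_quot_class:
  assumes "\<xi> \<in> borel_measurable M" "x \<in> E"
  shows "quot_smul \<xi> (quot_class x) = quot_class (smul \<xi> x)"
proof -
  have "seminorm_equiv (smul \<xi> x) (smul \<xi> (class_rep (quot_class x)))"
    using assms class_rep_quot_class by (intro seminorm_equiv_smul) auto
  then have "quot_class (smul \<xi> x) = quot_class (smul \<xi> (class_rep (quot_class x)))"
    using assms class_rep_quot_class by (simp add: quot_class_eq_iff smul_closed)
  then show ?thesis
    by (simp add: quot_smul_def)
qed

lemma quot_norm_quot_class:
  assumes "x \<in> E"
  shows "AE \<omega> in M. quot_norm (quot_class x) \<omega> = n x \<omega>"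
  using seminorm_cong[OF assms class_rep_quot_class[OF assms]]
  by eventually_elim (simp add: quot_norm_def)

lemma class_rep_mem_quotient:
  assumes "c \<in> quot_class ` E"
  shows "class_rep c \<in> E" "quot_class (class_rep c) = c"
  using assms class_rep_quot_class quot_class_class_rep by auto

text \<open>The laws for \<open>\<lambda>\<omega>. \<xi> \<omega> + \<eta> \<omega>\<close> and \<open>\<lambda>\<omega>. \<xi> \<omega> * \<eta> \<omega>\<close> are checked on a representative:
  for a general field \<open>'k\<close> these functions are not known to be measurable, so
  \<open>quot_smul_quot_class\<close> does not apply to them.\<close>

lemma quot_smul_add_fun:
  assumes "\<xi> \<in> borel_measurable M" "\<eta> \<in> borel_measurable M" "x \<in> E"
  shows "quot_smul (\<lambda>\<omega>. \<xi> \<omega> + \<eta> \<omega>) (quot_class x) =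
    quot_add (quot_smul \<xi> (quot_class x)) (quot_smul \<eta> (quot_class x))"
  using assms class_rep_quot_class(1)[OF assms(3)]
  by (simp add: quot_smul_def add_smul quot_add_quot_class smul_closed)

lemma quot_smul_mult_fun:
  assumes \<xi>: "\<xi> \<in> borel_measurable M" and \<eta>: "\<eta> \<in> borel_measurable M" and x: "x \<in> E"
  shows "quot_smul (\<lambda>\<omega>. \<xi> \<omega> * \<eta> \<omega>) (quot_class x) = quot_smul \<xi> (quot_smul \<eta> (quot_class x))"
proof -
  have r: "class_rep (quot_class x) \<in> E"
    using class_rep_quot_class(1)[OF x] .
  have "quot_smul (\<lambda>\<omega>. \<xi> \<omega> * \<eta> \<omega>) (quot_class x) = quot_class (smul \<xi> (smul \<eta> (class_rep (quot_class x))))"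
    using \<xi> \<eta> r by (simp add: quot_smul_def smul_smul)
  also have "\<dots> = quot_smul \<xi> (quot_class (smul \<eta> (class_rep (quot_class x))))"
    using \<xi> \<eta> r by (simp add: quot_smul_quot_class smul_closed)
  finally show ?thesis
    by (simp only: quot_smul_def[of \<eta>])
qed

lemma quot_smul_cong_AE:
  assumes "\<xi> \<in> borel_measurable M" "\<eta> \<in> borel_measurable M" "c \<in> quot_class ` E"
    and "AE \<omega> in M. \<xi> \<omega> = \<eta> \<omega>"
  shows "quot_smul \<xi> c = quot_smul \<eta> c"
  unfolding quot_smul_def using smul_cong_AE[OF assms(1,2) class_rep_mem_quotient(1)[OF assms(3)] assms(4)]
  by simp

lemma L0_module_quotient: "L0_module M (quot_class ` E) quot_add (quot_class zero) quot_smul"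
  unfolding L0_module_def
proof (intro conjI)
  show "\<forall>\<xi>\<in>borel_measurable M. \<forall>\<eta>\<in>borel_measurable M. \<forall>c\<in>quot_class ` E.
      (AE \<omega> in M. \<xi> \<omega> = \<eta> \<omega>) \<longrightarrow> quot_smul \<xi> c = quot_smul \<eta> c"
    using quot_smul_cong_AE by blast
  show "\<forall>c\<in>quot_class ` E. \<exists>d\<in>quot_class ` E. quot_add c d = quot_class zero"
  proof
    fix c assume "c \<in> quot_class ` E"
    then obtain x where x: "x \<in> E" "c = quot_class x" by blast
    then have "quot_add c (quot_class (neg x)) = quot_class zero"
      by (simp add: quot_add_quot_class neg_closed add_neg_self)
    then show "\<exists>d\<in>quot_class ` E. quot_add c d = quot_class zero"
      using x neg_closed by blast
  qed
  show "\<forall>c\<in>quot_class ` E. \<forall>d\<in>quot_class ` E. quot_add c d = quot_add d c"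
  proof (intro ballI)
    fix c d assume "c \<in> quot_class ` E" "d \<in> quot_class ` E"
    then obtain x y where "x \<in> E" "y \<in> E" "c = quot_class x" "d = quot_class y" by blast
    then show "quot_add c d = quot_add d c"
      by (simp add: quot_add_quot_class add_commute[of x y])
  qed
qed (simp_all add: quot_add_quot_class quot_smul_quot_class zero_closed add_closed smul_closed
       add_assoc add_zero_left smul_add smul_one quot_smul_add_fun quot_smul_mult_fun)

lemma L0_norm_quotient: "L0_norm M (quot_class ` E) quot_add (quot_class zero) quot_smul quot_norm"
  unfolding L0_norm_def L0_seminorm_def
proof (intro conjI ballI impI; clarsimp)
  fix x assume x: "x \<in> E"
  show "quot_norm (quot_class x) \<in> borel_measurable M"
    using x class_rep_quot_class by (simp add: quot_norm_def seminorm_measurable)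
  show "AE \<omega> in M. 0 \<le> quot_norm (quot_class x) \<omega>"
    using x class_rep_quot_class by (simp add: quot_norm_def seminorm_nonneg)
  show "quot_class x = quot_class zero" if "AE \<omega> in M. quot_norm (quot_class x) \<omega> = 0"
  proof -
    have "AE \<omega> in M. n x \<omega> = 0"
      using that quot_norm_quot_class[OF x] by eventually_elim simp
    then show ?thesis
      using x zero_closed by (simp add: quot_class_eq_iff seminorm_equiv_def diff_zero)
  qed
  fix \<xi> :: "'w \<Rightarrow> 'k" assume \<xi>: "\<xi> \<in> borel_measurable M"
  show "AE \<omega> in M. quot_norm (quot_smul \<xi> (quot_class x)) \<omega> = norm (\<xi> \<omega>) * quot_norm (quot_class x) \<omega>"
    using quot_norm_quot_class[OF smul_closed[OF \<xi> x]] seminorm_smul[OF \<xi> x] quot_norm_quot_class[OF x]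
    by eventually_elim (simp add: quot_smul_quot_class \<xi> x)
next
  fix x y assume x: "x \<in> E" and y: "y \<in> E"
  show "AE \<omega> in M. quot_norm (quot_add (quot_class x) (quot_class y)) \<omega> \<le>
      quot_norm (quot_class x) \<omega> + quot_norm (quot_class y) \<omega>"
    using quot_norm_quot_class[OF add_closed[OF x y]] seminorm_triangle[OF x y]
      quot_norm_quot_class[OF x] quot_norm_quot_class[OF y]
    by eventually_elim (simp add: quot_add_quot_class x y)
qed

lemma random_normed_module_quotient:
  "random_normed_module M (quot_class ` E) quot_add (quot_class zero) quot_smul quot_norm"
  by (simp add: random_normed_module_def L0_module_quotient L0_norm_quotient)

lemma quot_class_mem_eps_lambda_nbhd_iff:
  assumes "z \<in> E"
  shows "quot_class z \<in> eps_lambda_nbhd M (quot_class ` E) {quot_norm} e l \<longleftrightarrow>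
    z \<in> eps_lambda_nbhd M E {n} e l"
proof -
  have "measure M {\<omega> \<in> space M. quot_norm (quot_class z) \<omega> < e} = measure M {\<omega> \<in> space M. n z \<omega> < e}"
  proof (rule measure_eq_AE)
    show "AE \<omega> in M. (\<omega> \<in> {\<omega> \<in> space M. quot_norm (quot_class z) \<omega> < e}) = (\<omega> \<in> {\<omega> \<in> space M. n z \<omega> < e})"
      using quot_norm_quot_class[OF assms] by eventually_elim simp
    show "{\<omega> \<in> space M. quot_norm (quot_class z) \<omega> < e} \<in> sets M"
      using assms class_rep_quot_class seminorm_measurable by (simp add: quot_norm_def)
    show "{\<omega> \<in> space M. n z \<omega> < e} \<in> sets M"
      using assms seminorm_measurable by simp
  qed
  then show ?thesis
    using assms by (simp add: eps_lambda_nbhd_def)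
qed

end

section \<open>The \<open>(\<epsilon>,\<lambda>)\<close>-topology\<close>

context L0_seminormed_module
begin

lemma zero_mem_eps_lambda_nbhd:
  assumes "0 < e" "0 < l"
  shows "zero \<in> eps_lambda_nbhd M E {n} e l"
proof -
  have "measure M {\<omega> \<in> space M. n zero \<omega> < e} = measure M (space M)"
  proof (rule measure_eq_AE)
    show "AE \<omega> in M. (\<omega> \<in> {\<omega> \<in> space M. n zero \<omega> < e}) = (\<omega> \<in> space M)"
      using seminorm_zero by eventually_elim (use assms in auto)
    show "{\<omega> \<in> space M. n zero \<omega> < e} \<in> sets M"
      using seminorm_measurable[OF zero_closed] by measurable
  qed simp
  then show ?thesis
    using assms zero_closed by (simp add: eps_lambda_nbhd_singleton prob_space)
qed

lemma add_mem_eps_lambda_nbhd: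
  assumes a: "a \<in> eps_lambda_nbhd M E {n} (e/2) (l/2)" and b: "b \<in> eps_lambda_nbhd M E {n} (e/2) (l/2)"
  shows "add a b \<in> eps_lambda_nbhd M E {n} e l"
proof -
  have aE: "a \<in> E" and bE: "b \<in> E"
    using a b by (auto simp: eps_lambda_nbhd_singleton)
  define A where "A = {\<omega> \<in> space M. n a \<omega> < e/2}"
  define B where "B = {\<omega> \<in> space M. n b \<omega> < e/2}"
  define C where "C = {\<omega> \<in> space M. n (add a b) \<omega> < e}"
  have sets: "A \<in> sets M" "B \<in> sets M" "C \<in> sets M"
    using seminorm_measurable[OF aE] seminorm_measurable[OF bE] seminorm_measurable[OF add_closed[OF aE bE]]
    unfolding A_def B_def C_def by measurable
  have "AE \<omega> in M. \<omega> \<in> A \<inter> B \<longrightarrow> \<omega> \<in> C"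
    using seminorm_triangle[OF aE bE] by eventually_elim (auto simp: A_def B_def C_def)
  then have "measure M (A \<inter> B) \<le> measure M C"
    using sets(3) by (rule finite_measure_mono_AE)
  moreover have "measure M A + measure M B - measure M (A \<inter> B) \<le> 1"
    using sets(1,2) measure_Un3[of A M B] prob_le_1[of "A \<union> B"] by (simp add: fmeasurable_eq_sets)
  moreover have "1 - l/2 < measure M A" "1 - l/2 < measure M B"
    using a b by (simp_all add: eps_lambda_nbhd_singleton A_def B_def)
  ultimately have "1 - l < measure M C"
    by linarith
  then show ?thesis
    using add_closed[OF aE bE] by (simp add: eps_lambda_nbhd_singleton C_def)
qed

end

locale L0_seminorm_family = prob_L0_module M E add zero smul
  for M :: "'w measure" and E :: "'e set" and add zero
    and smul :: "('w \<Rightarrow> 'k::{real_normed_field,banach}) \<Rightarrow> 'e \<Rightarrow> 'e" +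
  fixes PP :: "('e \<Rightarrow> 'w \<Rightarrow> real) set"
  assumes seminorm_family: "p \<in> PP \<Longrightarrow> L0_seminorm M E add smul p"
    and family_nonempty: "PP \<noteq> {}"
begin

definition finite_subfamilies :: "('e \<Rightarrow> 'w \<Rightarrow> real) set set" where
  "finite_subfamilies = {Q. finite Q \<and> Q \<noteq> {} \<and> Q \<subseteq> PP}"

definition nbhd_params :: "('e \<Rightarrow> 'w \<Rightarrow> real) set \<Rightarrow> real \<Rightarrow> real \<Rightarrow> bool" where
  "nbhd_params Q e l \<longleftrightarrow> Q \<in> finite_subfamilies \<and> 0 < e \<and> 0 < l \<and> l < 1"

lemma nbhd_params_half: "nbhd_params Q e l \<Longrightarrow> nbhd_params Q (e/2) (l/2)"
  by (simp add: nbhd_params_def)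

lemma L0_seminormed_module_max_seminorm:
  assumes "Q \<in> finite_subfamilies"
  shows "L0_seminormed_module M E add zero smul (max_seminorm Q)"
proof -
  have "L0_seminorm M E add smul (max_seminorm Q)"
    using assms by (intro L0_seminorm_max_seminorm) (auto simp: finite_subfamilies_def intro: seminorm_family)
  then show ?thesis
    by (intro L0_seminormed_module.intro prob_L0_module_axioms L0_seminormed_module_axioms.intro)
qed

lemma zero_mem_eps_lambda_nbhd: "nbhd_params Q e l \<Longrightarrow> zero \<in> eps_lambda_nbhd M E Q e l"
  using L0_seminormed_module.zero_mem_eps_lambda_nbhd[OF L0_seminormed_module_max_seminorm]
  by (simp add: nbhd_params_def finite_subfamilies_def eps_lambda_nbhd_max_seminorm)

lemma add_mem_eps_lambda_nbhd:
  "nbhd_params Q e l \<Longrightarrow> a \<in> eps_lambda_nbhd M E Q (e/2) (l/2) \<Longrightarrow>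
    b \<in> eps_lambda_nbhd M E Q (e/2) (l/2) \<Longrightarrow> add a b \<in> eps_lambda_nbhd M E Q e l"
  using L0_seminormed_module.add_mem_eps_lambda_nbhd[OF L0_seminormed_module_max_seminorm]
  by (simp add: nbhd_params_def finite_subfamilies_def eps_lambda_nbhd_max_seminorm)

lemma eps_lambda_nbhd_mono:
  assumes "finite Q'" "Q \<noteq> {}" "Q \<subseteq> Q'" "Q' \<subseteq> PP" "e' \<le> e" "l' \<le> l"
  shows "eps_lambda_nbhd M E Q' e' l' \<subseteq> eps_lambda_nbhd M E Q e l"
proof
  fix z assume z: "z \<in> eps_lambda_nbhd M E Q' e' l'"
  then have "z \<in> E" by (simp add: eps_lambda_nbhd_def)
  have "Max ((\<lambda>p. p z \<omega>) ` Q) < e" if "Max ((\<lambda>p. p z \<omega>) ` Q') < e'" for \<omega>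
  proof -
    have "Max ((\<lambda>p. p z \<omega>) ` Q) \<le> Max ((\<lambda>p. p z \<omega>) ` Q')"
      using assms by (intro Max_mono) (auto intro: finite_subset)
    then show ?thesis
      using that assms(5) by linarith
  qed
  then have "{\<omega> \<in> space M. Max ((\<lambda>p. p z \<omega>) ` Q') < e'} \<subseteq> {\<omega> \<in> space M. Max ((\<lambda>p. p z \<omega>) ` Q) < e}"
    by auto
  moreover have "(\<lambda>\<omega>. Max ((\<lambda>p. p z \<omega>) ` Q)) \<in> borel_measurable M"
    using assms \<open>z \<in> E\<close> by (intro borel_measurable_Max) (auto intro: finite_subset L0_seminorm_measurable seminorm_family)
  then have "{\<omega> \<in> space M. Max ((\<lambda>p. p z \<omega>) ` Q) < e} \<in> sets M"
    by measurable
  ultimately have "measure M {\<omega> \<in> space M. Max ((\<lambda>p. p z \<omega>) ` Q') < e'} \<le>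
      measure M {\<omega> \<in> space M. Max ((\<lambda>p. p z \<omega>) ` Q) < e}"
    by (rule finite_measure_mono)
  then show "z \<in> eps_lambda_nbhd M E Q e l"
    using z assms(6) by (auto simp: eps_lambda_nbhd_def)
qed

definition eps_lambda_open :: "'e set \<Rightarrow> bool" where
  "eps_lambda_open U \<longleftrightarrow> U \<subseteq> E \<and>
    (\<forall>x\<in>U. \<exists>Q e l. nbhd_params Q e l \<and> (\<forall>z\<in>eps_lambda_nbhd M E Q e l. add x z \<in> U))"

lemma eps_lambda_openE:
  assumes "eps_lambda_open U" "x \<in> U"
  obtains Q e l where "nbhd_params Q e l" "\<forall>z\<in>eps_lambda_nbhd M E Q e l. add x z \<in> U"
  using assms unfolding eps_lambda_open_def by blast

lemma eps_lambda_open_Int: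
  assumes U: "eps_lambda_open U" and V: "eps_lambda_open V"
  shows "eps_lambda_open (U \<inter> V)"
  unfolding eps_lambda_open_def
proof (intro conjI ballI)
  show "U \<inter> V \<subseteq> E"
    using U by (auto simp: eps_lambda_open_def)
  fix x assume x: "x \<in> U \<inter> V"
  obtain Q1 e1 l1 where params1: "nbhd_params Q1 e1 l1"
    and U1: "\<forall>z\<in>eps_lambda_nbhd M E Q1 e1 l1. add x z \<in> U"
    by (rule eps_lambda_openE[OF U IntD1[OF x]])
  obtain Q2 e2 l2 where params2: "nbhd_params Q2 e2 l2"
    and V2: "\<forall>z\<in>eps_lambda_nbhd M E Q2 e2 l2. add x z \<in> V"
    by (rule eps_lambda_openE[OF V IntD2[OF x]])
  have "eps_lambda_nbhd M E (Q1 \<union> Q2) (min e1 e2) (min l1 l2) \<subseteq> eps_lambda_nbhd M E Q1 e1 l1"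
    using params1 params2 unfolding nbhd_params_def finite_subfamilies_def
    by (intro eps_lambda_nbhd_mono) auto
  moreover have "eps_lambda_nbhd M E (Q1 \<union> Q2) (min e1 e2) (min l1 l2) \<subseteq> eps_lambda_nbhd M E Q2 e2 l2"
    using params1 params2 unfolding nbhd_params_def finite_subfamilies_def
    by (intro eps_lambda_nbhd_mono) auto
  moreover have "nbhd_params (Q1 \<union> Q2) (min e1 e2) (min l1 l2)"
    using params1 params2 by (auto simp: nbhd_params_def finite_subfamilies_def)
  ultimately show "\<exists>Q e l. nbhd_params Q e l \<and> (\<forall>z\<in>eps_lambda_nbhd M E Q e l. add x z \<in> U \<inter> V)"
    using U1 V2 by blast
qed

lemma eps_lambda_open_Union:
  assumes K: "\<forall>U\<in>K. eps_lambda_open U"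
  shows "eps_lambda_open (\<Union>K)"
  unfolding eps_lambda_open_def
proof (intro conjI ballI)
  show "\<Union>K \<subseteq> E"
    using K by (auto simp: eps_lambda_open_def)
  fix x assume "x \<in> \<Union>K"
  then obtain U where U: "U \<in> K" "x \<in> U" by blast
  then obtain Q e l where "nbhd_params Q e l" "\<forall>z\<in>eps_lambda_nbhd M E Q e l. add x z \<in> U"
    using K by (meson eps_lambda_openE)
  then show "\<exists>Q e l. nbhd_params Q e l \<and> (\<forall>z\<in>eps_lambda_nbhd M E Q e l. add x z \<in> \<Union>K)"
    using U(1) by blast
qed

lemma openin_eps_lambda_topology: "openin (eps_lambda_topology M E add PP) = eps_lambda_open"
proof -
  have "istopology eps_lambda_open"
    unfolding istopology_def using eps_lambda_open_Int eps_lambda_open_Union by blast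
  moreover have "eps_lambda_topology M E add PP = topology eps_lambda_open"
    unfolding eps_lambda_topology_def eps_lambda_open_def[abs_def] nbhd_params_def finite_subfamilies_def
    by simp
  ultimately show ?thesis
    by simp
qed

lemma topspace_eps_lambda_topology: "topspace (eps_lambda_topology M E add PP) = E"
proof -
  obtain p where "p \<in> PP" using family_nonempty by blast
  then have "nbhd_params {p} 1 (1/2)"
    by (simp add: nbhd_params_def finite_subfamilies_def)
  then have "openin (eps_lambda_topology M E add PP) E"
    unfolding openin_eps_lambda_topology eps_lambda_open_def by (auto simp: eps_lambda_nbhd_def add_closed)
  then show ?thesis
    by (metis openin_subset openin_topspace eps_lambda_open_def openin_eps_lambda_topology subset_antisym)
qed

definition eps_lambda_interior :: "'e set \<Rightarrow> 'e set" where
  "eps_lambda_interior T =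
    {y \<in> E. \<exists>Q e l. nbhd_params Q e l \<and> (\<forall>z\<in>eps_lambda_nbhd M E Q e l. add y z \<in> T)}"

lemma eps_lambda_interior_subset: "eps_lambda_interior T \<subseteq> T"
proof
  fix y assume "y \<in> eps_lambda_interior T"
  then obtain Q e l where "y \<in> E" "nbhd_params Q e l" "\<forall>z\<in>eps_lambda_nbhd M E Q e l. add y z \<in> T"
    unfolding eps_lambda_interior_def by blast
  then show "y \<in> T"
    using zero_mem_eps_lambda_nbhd add_zero_right by metis
qed

text \<open>Openness of the interior is where the halving of \<open>\<epsilon>\<close> and \<open>\<lambda>\<close> is needed:
  \<open>N(Q, \<epsilon>/2, \<lambda>/2) + N(Q, \<epsilon>/2, \<lambda>/2) \<subseteq> N(Q, \<epsilon>, \<lambda>)\<close>.\<close>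

lemma eps_lambda_open_interior: "eps_lambda_open (eps_lambda_interior T)"
  unfolding eps_lambda_open_def
proof (intro conjI ballI)
  show "eps_lambda_interior T \<subseteq> E"
    by (auto simp: eps_lambda_interior_def)
  fix y assume "y \<in> eps_lambda_interior T"
  then obtain Q e l where y: "y \<in> E" and params: "nbhd_params Q e l"
    and sub: "\<forall>z\<in>eps_lambda_nbhd M E Q e l. add y z \<in> T"
    unfolding eps_lambda_interior_def by blast
  have "add y w \<in> eps_lambda_interior T" if w: "w \<in> eps_lambda_nbhd M E Q (e/2) (l/2)" for w
  proof -
    have wE: "w \<in> E" using w by (simp add: eps_lambda_nbhd_def)
    have "add (add y w) z \<in> T" if z: "z \<in> eps_lambda_nbhd M E Q (e/2) (l/2)" for z
      using sub add_mem_eps_lambda_nbhd[OF params w z] add_assoc[OF y wE] z by (simp add: eps_lambda_nbhd_def)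
    then show ?thesis
      unfolding eps_lambda_interior_def using y wE add_closed nbhd_params_half[OF params] by blast
  qed
  then show "\<exists>Q e l. nbhd_params Q e l \<and> (\<forall>z\<in>eps_lambda_nbhd M E Q e l. add y z \<in> eps_lambda_interior T)"
    using nbhd_params_half[OF params] by blast
qed

lemma open_subset_translate_eps_lambda_nbhd:
  assumes "x \<in> E" "nbhd_params Q e l"
  shows "\<exists>W. openin (eps_lambda_topology M E add PP) W \<and> x \<in> W \<and> W \<subseteq> add x ` eps_lambda_nbhd M E Q e l"
proof -
  have "x \<in> eps_lambda_interior (add x ` eps_lambda_nbhd M E Q e l)"
    unfolding eps_lambda_interior_def using assms by blast
  then show ?thesis
    using eps_lambda_open_interior eps_lambda_interior_subset
    unfolding openin_eps_lambda_topology by blast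
qed

end

section \<open>Embedding into the product of the quotients\<close>

lemma (in L0_seminormed_module) L0_seminorm_family_quotient:
  "L0_seminorm_family M (quot_class ` E) quot_add (quot_class zero) quot_smul {quot_norm}"
proof -
  have "L0_module M (quot_class ` E) quot_add (quot_class zero) quot_smul"
    "L0_seminorm M (quot_class ` E) quot_add quot_smul quot_norm"
    using random_normed_module_quotient by (simp_all add: random_normed_module_def L0_norm_def)
  then show ?thesis
    by (intro L0_seminorm_family.intro prob_L0_module.intro L0_seminorm_family_axioms.intro
        prob_L0_module_axioms.intro prob_space_axioms) auto
qed

context L0_seminorm_family
begin

abbreviation factor_class :: "('e \<Rightarrow> 'w \<Rightarrow> real) set \<Rightarrow> 'e \<Rightarrow> 'e set" where
  "factor_class Q \<equiv> L0_seminormed_module.quot_class M E add smul (max_seminorm Q)"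

abbreviation factor_add :: "('e \<Rightarrow> 'w \<Rightarrow> real) set \<Rightarrow> 'e set \<Rightarrow> 'e set \<Rightarrow> 'e set" where
  "factor_add Q \<equiv> L0_seminormed_module.quot_add M E add smul (max_seminorm Q)"

abbreviation factor_smul :: "('e \<Rightarrow> 'w \<Rightarrow> real) set \<Rightarrow> ('w \<Rightarrow> 'k) \<Rightarrow> 'e set \<Rightarrow> 'e set" where
  "factor_smul Q \<equiv> L0_seminormed_module.quot_smul M E add smul (max_seminorm Q)"

abbreviation factor_norm :: "('e \<Rightarrow> 'w \<Rightarrow> real) set \<Rightarrow> 'e set \<Rightarrow> 'w \<Rightarrow> real" where
  "factor_norm Q \<equiv> L0_seminormed_module.quot_norm (max_seminorm Q)"

abbreviation factor_topology :: "('e \<Rightarrow> 'w \<Rightarrow> real) set \<Rightarrow> 'e set topology" where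
  "factor_topology Q \<equiv> eps_lambda_topology M (factor_class Q ` E) (factor_add Q) {factor_norm Q}"

definition factor_embedding :: "'e \<Rightarrow> ('e \<Rightarrow> 'w \<Rightarrow> real) set \<Rightarrow> 'e set" where
  "factor_embedding x = (\<lambda>Q\<in>finite_subfamilies. factor_class Q x)"

lemma random_normed_module_factor:
  "Q \<in> finite_subfamilies \<Longrightarrow>
    random_normed_module M (factor_class Q ` E) (factor_add Q) (factor_class Q zero) (factor_smul Q) (factor_norm Q)"
  by (rule L0_seminormed_module.random_normed_module_quotient[OF L0_seminormed_module_max_seminorm])

lemma L0_seminorm_family_factor:
  "Q \<in> finite_subfamilies \<Longrightarrow>
    L0_seminorm_family M (factor_class Q ` E) (factor_add Q) (factor_class Q zero) (factor_smul Q) {factor_norm Q}"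
  by (rule L0_seminormed_module.L0_seminorm_family_quotient[OF L0_seminormed_module_max_seminorm])

lemma factor_add_factor_class:
  "Q \<in> finite_subfamilies \<Longrightarrow> x \<in> E \<Longrightarrow> y \<in> E \<Longrightarrow>
    factor_add Q (factor_class Q x) (factor_class Q y) = factor_class Q (add x y)"
  by (rule L0_seminormed_module.quot_add_quot_class[OF L0_seminormed_module_max_seminorm])

lemma factor_smul_factor_class:
  "Q \<in> finite_subfamilies \<Longrightarrow> \<xi> \<in> borel_measurable M \<Longrightarrow> x \<in> E \<Longrightarrow>
    factor_smul Q \<xi> (factor_class Q x) = factor_class Q (smul \<xi> x)"
  by (rule L0_seminormed_module.quot_smul_quot_class[OF L0_seminormed_module_max_seminorm])

lemma factor_class_mem_eps_lambda_nbhd_iff: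
  assumes "Q \<in> finite_subfamilies" "z \<in> E"
  shows "factor_class Q z \<in> eps_lambda_nbhd M (factor_class Q ` E) {factor_norm Q} e l \<longleftrightarrow>
    z \<in> eps_lambda_nbhd M E Q e l"
  using L0_seminormed_module.quot_class_mem_eps_lambda_nbhd_iff[OF L0_seminormed_module_max_seminorm[OF assms(1)] assms(2)]
    assms(1) by (simp add: finite_subfamilies_def eps_lambda_nbhd_max_seminorm)

lemma factor_nbhd_params_iff:
  assumes "Q \<in> finite_subfamilies"
  shows "L0_seminorm_family.nbhd_params {factor_norm Q} Q' e l \<longleftrightarrow> Q' = {factor_norm Q} \<and> nbhd_params Q e l"
  using assms
  by (auto simp: L0_seminorm_family.nbhd_params_def[OF L0_seminorm_family_factor[OF assms]]
      L0_seminorm_family.finite_subfamilies_def[OF L0_seminorm_family_factor[OF assms]] nbhd_params_def)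

lemma continuous_map_factor_class:
  assumes Q: "Q \<in> finite_subfamilies"
  shows "continuous_map (eps_lambda_topology M E add PP) (factor_topology Q) (factor_class Q)"
proof -
  interpret G: L0_seminorm_family M "factor_class Q ` E" "factor_add Q" "factor_class Q zero" "factor_smul Q" "{factor_norm Q}"
    by (rule L0_seminorm_family_factor[OF Q])
  show ?thesis
    unfolding continuous_map_def topspace_eps_lambda_topology G.topspace_eps_lambda_topology
  proof (intro conjI allI impI)
    fix U assume "openin (factor_topology Q) U"
    then have U: "G.eps_lambda_open U"
      by (simp add: G.openin_eps_lambda_topology)
    show "openin (eps_lambda_topology M E add PP) {x \<in> E. factor_class Q x \<in> U}"
      unfolding openin_eps_lambda_topology eps_lambda_open_def
    proof (intro conjI ballI)
      fix x assume x: "x \<in> {x \<in> E. factor_class Q x \<in> U}"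
      then obtain Q' e l where params': "G.nbhd_params Q' e l"
        and sub: "\<forall>c\<in>eps_lambda_nbhd M (factor_class Q ` E) Q' e l. factor_add Q (factor_class Q x) c \<in> U"
        using G.eps_lambda_openE[OF U] by blast
      then have params: "nbhd_params Q e l" and Q': "Q' = {factor_norm Q}"
        using factor_nbhd_params_iff[OF Q] by blast+
      have "add x z \<in> {x \<in> E. factor_class Q x \<in> U}" if z: "z \<in> eps_lambda_nbhd M E Q e l" for z
      proof -
        have zE: "z \<in> E"
          using z by (simp add: eps_lambda_nbhd_def)
        then have "factor_add Q (factor_class Q x) (factor_class Q z) \<in> U"
          using sub z Q' factor_class_mem_eps_lambda_nbhd_iff[OF Q zE] by blast
        then show ?thesis
          using x zE Q by (simp add: factor_add_factor_class add_closed)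
      qed
      then show "\<exists>Q' e l. nbhd_params Q' e l \<and>
          (\<forall>z\<in>eps_lambda_nbhd M E Q' e l. add x z \<in> {x \<in> E. factor_class Q x \<in> U})"
        using params by blast
    qed auto
  qed auto
qed

lemma factor_class_diff:
  assumes Q: "Q \<in> finite_subfamilies" and x: "x \<in> E" and y: "y \<in> E" and c: "c \<in> factor_class Q ` E"
    and y_eq: "factor_class Q y = factor_add Q (factor_class Q x) c"
  shows "factor_class Q (diff y x) = c"
proof -
  obtain w where w: "c = factor_class Q w" "w \<in> E"
    using c by blast
  have "factor_class Q (diff y x) = factor_add Q (factor_class Q y) (factor_class Q (neg x))"
    using x y Q by (simp add: diff_def factor_add_factor_class neg_closed)
  also have "\<dots> = factor_class Q (diff (add x w) x)"
    using x w y_eq Q by (simp add: diff_def factor_add_factor_class neg_closed add_closed)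
  also have "\<dots> = c"
    using x w by (simp add: add_diff_cancel_left')
  finally show ?thesis .
qed

lemma open_contains_factor_preimage:
  assumes "openin (eps_lambda_topology M E add PP) U" "x \<in> U"
  shows "\<exists>Q\<in>finite_subfamilies. \<exists>W. openin (factor_topology Q) W \<and> factor_class Q x \<in> W \<and>
    (\<forall>y\<in>E. factor_class Q y \<in> W \<longrightarrow> y \<in> U)"
proof -
  have U: "eps_lambda_open U"
    using assms(1) by (simp add: openin_eps_lambda_topology)
  then have x: "x \<in> E"
    using assms(2) by (auto simp: eps_lambda_open_def)
  obtain Q e l where params: "nbhd_params Q e l" and sub: "\<forall>z\<in>eps_lambda_nbhd M E Q e l. add x z \<in> U"
    using eps_lambda_openE[OF U assms(2)] by blast
  then have Q: "Q \<in> finite_subfamilies"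
    by (simp add: nbhd_params_def)
  interpret G: L0_seminorm_family M "factor_class Q ` E" "factor_add Q" "factor_class Q zero" "factor_smul Q" "{factor_norm Q}"
    by (rule L0_seminorm_family_factor[OF Q])
  have "G.nbhd_params {factor_norm Q} e l"
    using params factor_nbhd_params_iff[OF Q] by blast
  then obtain W where W: "openin (factor_topology Q) W" "factor_class Q x \<in> W"
    and W_sub: "W \<subseteq> factor_add Q (factor_class Q x) ` eps_lambda_nbhd M (factor_class Q ` E) {factor_norm Q} e l"
    using G.open_subset_translate_eps_lambda_nbhd[OF imageI[OF x]] by meson
  have "y \<in> U" if y: "y \<in> E" "factor_class Q y \<in> W" for y
  proof -
    have "factor_class Q y \<in> factor_add Q (factor_class Q x) ` eps_lambda_nbhd M (factor_class Q ` E) {factor_norm Q} e l"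
      using W_sub y(2) by (rule subsetD)
    then obtain c where y_eq: "factor_class Q y = factor_add Q (factor_class Q x) c"
      and c: "c \<in> eps_lambda_nbhd M (factor_class Q ` E) {factor_norm Q} e l"
      by (rule imageE)
    moreover have "c \<in> factor_class Q ` E"
      using c by (simp add: eps_lambda_nbhd_def)
    ultimately have "factor_class Q (diff y x) = c"
      using factor_class_diff[OF Q x y(1)] by blast
    then have "diff y x \<in> eps_lambda_nbhd M E Q e l"
      using c factor_class_mem_eps_lambda_nbhd_iff[OF Q diff_closed[OF y(1) x]] by simp
    then have "add x (diff y x) \<in> U"
      using sub by blast
    then show "y \<in> U"
      using x y by (simp add: add_diff_inverse)
  qed
  then show ?thesis
    using Q W by blast
qed

lemma inj_on_factor_embedding:
  assumes separating: "\<forall>x\<in>E. (\<forall>p\<in>PP. AE \<omega> in M. p x \<omega> = 0) \<longrightarrow> x = zero"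
  shows "inj_on factor_embedding E"
proof (rule inj_onI)
  fix x y assume x: "x \<in> E" and y: "y \<in> E" and eq: "factor_embedding x = factor_embedding y"
  have "AE \<omega> in M. p (diff x y) \<omega> = 0" if p: "p \<in> PP" for p
  proof -
    interpret P: L0_seminormed_module M E add zero smul p
      using L0_seminormed_module_max_seminorm[of "{p}"] p
      by (simp add: finite_subfamilies_def max_seminorm_singleton)
    have "P.quot_class x = P.quot_class y"
      using fun_cong[OF eq, of "{p}"] p
      by (simp add: factor_embedding_def finite_subfamilies_def max_seminorm_singleton)
    then show ?thesis
      using x y by (simp add: P.quot_class_eq_iff P.seminorm_equiv_def)
  qed
  then have "diff x y = zero"
    using separating diff_closed[OF x y] by blast
  then show "x = y"
    by (rule diff_eq_zeroD[OF x y])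
qed

lemma homeomorphic_map_factor_embedding:
  assumes "\<forall>x\<in>E. (\<forall>p\<in>PP. AE \<omega> in M. p x \<omega> = 0) \<longrightarrow> x = zero"
  shows "homeomorphic_map (eps_lambda_topology M E add PP)
    (subtopology (product_topology factor_topology finite_subfamilies) (factor_embedding ` E)) factor_embedding"
  using homeomorphic_map_into_product_topology[of finite_subfamilies "eps_lambda_topology M E add PP"
      factor_topology factor_embedding]
    continuous_map_factor_class open_contains_factor_preimage inj_on_factor_embedding[OF assms]
  by (simp add: factor_embedding_def topspace_eps_lambda_topology)

lemma factor_embedding_add:
  "x \<in> E \<Longrightarrow> y \<in> E \<Longrightarrow>
    factor_embedding (add x y) = (\<lambda>Q\<in>finite_subfamilies. factor_add Q (factor_embedding x Q) (factor_embedding y Q))"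
  unfolding factor_embedding_def by (rule restrict_ext) (simp add: factor_add_factor_class)

lemma factor_embedding_smul:
  "\<xi> \<in> borel_measurable M \<Longrightarrow> x \<in> E \<Longrightarrow>
    factor_embedding (smul \<xi> x) = (\<lambda>Q\<in>finite_subfamilies. factor_smul Q \<xi> (factor_embedding x Q))"
  unfolding factor_embedding_def by (rule restrict_ext) (simp add: factor_smul_factor_class)

lemma factor_embedding_PiE: "x \<in> E \<Longrightarrow> factor_embedding x \<in> (\<Pi>\<^sub>E Q\<in>finite_subfamilies. factor_class Q ` E)"
  by (simp add: factor_embedding_def)

end

theorem proposition5p1:
  fixes M :: "'w measure"
    and E :: "'e set" and add :: "'e \<Rightarrow> 'e \<Rightarrow> 'e" and zero :: 'e
    and smul :: "('w \<Rightarrow> 'k::{real_normed_field,banach}) \<Rightarrow> 'e \<Rightarrow> 'e"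
    and PP :: "('e \<Rightarrow> 'w \<Rightarrow> real) set"
  assumes "prob_space M"
    and "random_locally_convex_module M E add zero smul PP"
    and "PP \<noteq> {}"
  shows "\<exists>(QQ :: ('e \<Rightarrow> 'w \<Rightarrow> real) set set)
           (Eq :: ('e \<Rightarrow> 'w \<Rightarrow> real) set \<Rightarrow> 'e set set)
           (addq :: ('e \<Rightarrow> 'w \<Rightarrow> real) set \<Rightarrow> 'e set \<Rightarrow> 'e set \<Rightarrow> 'e set)
           (zeroq :: ('e \<Rightarrow> 'w \<Rightarrow> real) set \<Rightarrow> 'e set)
           (smulq :: ('e \<Rightarrow> 'w \<Rightarrow> real) set \<Rightarrow> ('w \<Rightarrow> 'k) \<Rightarrow> 'e set \<Rightarrow> 'e set)
           (nmq :: ('e \<Rightarrow> 'w \<Rightarrow> real) set \<Rightarrow> 'e set \<Rightarrow> 'w \<Rightarrow> real)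
           (h :: 'e \<Rightarrow> ('e \<Rightarrow> 'w \<Rightarrow> real) set \<Rightarrow> 'e set).
         (\<forall>q\<in>QQ. random_normed_module M (Eq q) (addq q) (zeroq q) (smulq q) (nmq q)) \<and>
         (\<forall>x\<in>E. h x \<in> (\<Pi>\<^sub>E q\<in>QQ. Eq q)) \<and>
         (\<forall>x\<in>E. \<forall>y\<in>E. h (add x y) = (\<lambda>q\<in>QQ. addq q (h x q) (h y q))) \<and>
         (\<forall>\<xi>\<in>borel_measurable M. \<forall>x\<in>E. h (smul \<xi> x) = (\<lambda>q\<in>QQ. smulq q \<xi> (h x q))) \<and>
         homeomorphic_map (eps_lambda_topology M E add PP)
           (subtopology
              (product_topology (\<lambda>q. eps_lambda_topology M (Eq q) (addq q) {nmq q}) QQ)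
              (h ` E))
           h"
proof -
  have module: "L0_module M E add zero smul"
    and seminorms: "\<forall>p\<in>PP. L0_seminorm M E add smul p"
    and separating: "\<forall>x\<in>E. (\<forall>p\<in>PP. AE \<omega> in M. p x \<omega> = 0) \<longrightarrow> x = zero"
    using assms(2) by (simp_all add: random_locally_convex_module_def)
  interpret L0_seminorm_family M E add zero smul PP
    using assms(1,3) module seminorms
    by (intro L0_seminorm_family.intro prob_L0_module.intro prob_L0_module_axioms.intro
        L0_seminorm_family_axioms.intro) auto
  show ?thesis
    using random_normed_module_factor factor_embedding_PiE factor_embedding_add factor_embedding_smul
      homeomorphic_map_factor_embedding[OF separating]
    by (intro exI[of _ finite_subfamilies] exI[of _ "\<lambda>Q. factor_class Q ` E"] exI[of _ factor_add]
        exI[of _ "\<lambda>Q. factor_class Q zero"] exI[of _ factor_smul] exI[of _ factor_norm]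
        exI[of _ factor_embedding]) blast
qed

end
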